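(* Let $\mu>1$ be a real number and $\beta>1$ an integer such that $1-\mu^{-(1-1/\sqrt{\beta})}\ge \frac1e$ and $\mu>e$. Let $f_{\mu,\beta}(z)=\prod_{k=1}^\infty\left(1+\mu z^{\beta^k}\right)$, $z\in\mathbf D$. Then $D_+(f_{\mu,\beta})$ has full (Lebesgue) measure in $\mathbf T$.
   Context: $\mathbf D$ is the open unit disc, $\mathbf T$ the unit circle. The function $f_{\mu,\beta}$ belongs to the Korenblum space $A^{-\infty}$ (analytic $f$ on $\mathbf D$ with $|f(z)|\le C(1-|z|)^{-k}$ for some constants $C,k$). For such $f$, $D_+(f)=\{\theta\in[0,2\pi):\ \liminf_{r\to1}\frac{\log|f(re^{i\theta})|}{|\log(1-r)|}>0\}$, identified with a subset of $\mathbf T$ via $\theta\mapsto e^{i\theta}$. *)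

theory Defs
  imports "HOL-Analysis.Analysis"
begin

definition f_mu_beta :: "real \<Rightarrow> nat \<Rightarrow> complex \<Rightarrow> complex" where
  "f_mu_beta \<mu> \<beta> z = (\<Prod>k. 1 + complex_of_real \<mu> * z ^ (\<beta> ^ Suc k))"

definition log_abs :: "complex \<Rightarrow> ereal" where
  "log_abs w = (if w = 0 then -\<infinity> else ereal (ln (cmod w)))"

definition D_plus :: "(complex \<Rightarrow> complex) \<Rightarrow> real set" where
  "D_plus f = {\<theta> \<in> {0..<2*pi}.
     Liminf (at_left 1)
       (\<lambda>r::real. log_abs (f (complex_of_real r * cis \<theta>)) / ereal \<bar>ln (1 - r)\<bar>) > 0}"

end

theory Submission
  imports Defs "HOL-Real_Asymp.Real_Asymp"
begin

text \<open>
  By Borel--Cantelli, almost every \<theta> satisfies \<open>|sin (\<beta>^(k+1) \<theta>)| \<ge> 1/(k+2)^2\<close> for all large k.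
  Fix such a \<theta> and r close to 1, and let g be the first index with \<open>r^(\<beta>^(g+1)) < c\<^sub>0\<close>,
  where \<open>\<mu> c\<^sub>0 = \<mu>/2 + 1\<close>. The g factors before it have modulus at least \<open>\<mu>/2 > 1\<close>; the
  modulus of a factor \<open>1 + \<rho> e^{it}\<close> always dominates \<open>|sin t|\<close>, which takes care of a bounded
  number of further factors; beyond them the moduli \<open>\<mu> r^(\<beta>^(k+1))\<close> decay geometrically, so the
  remaining factors have a product bounded away from 0. Hence \<open>log |f(re^{i\<theta>})| \<ge> g log(\<mu>/2) - O(log g)\<close>,
  and g is comparable to \<open>|log (1-r)| / log \<beta>\<close>.
\<close>

section \<open>Where \<open>sin (m \<theta>)\<close> is small\<close>

lemma sin_ge_five_sixths:
  fixes y :: real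
  assumes "0 \<le> y" "y \<le> 1"
  shows "5/6 * y \<le> sin y"
proof -
  have "\<bar>sin y - (\<Sum>m<3. sin_coeff m * y ^ m)\<bar> \<le> inverse (fact 3) * \<bar>y\<bar> ^ 3"
    by (rule Maclaurin_sin_bound)
  moreover have "(\<Sum>m<3. sin_coeff m * y ^ m) = y"
    by (simp add: numeral_3_eq_3 sin_coeff_def)
  moreover have "y ^ 3 \<le> y"
    using assms mult_left_le[of "y * y" y] mult_le_one[of y y] by (simp add: power3_eq_cube mult.assoc)
  ultimately have "\<bar>sin y - y\<bar> \<le> y / 6"
    using assms by (simp add: fact_numeral)
  then show ?thesis
    by linarith
qed

lemma abs_le_three_abs_sin:
  fixes y :: real
  assumes "\<bar>y\<bar> \<le> pi/2"
  shows "\<bar>y\<bar> \<le> 3 * \<bar>sin y\<bar>"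
proof -
  have "z \<le> 3 * sin z" if "0 \<le> z" "z \<le> pi/2" for z
  proof (cases "z \<le> 1")
    case True
    then show ?thesis using sin_ge_five_sixths[of z] that by linarith
  next
    case False
    have "sin 1 \<le> sin z"
      using that False pi_ge_two by (subst sin_mono_le_eq) auto
    moreover have "5/6 \<le> sin (1::real)"
      using sin_ge_five_sixths[of 1] by simp
    ultimately show ?thesis
      using that pi_half_less_two by linarith
  qed
  from this[of y] this[of "-y"] assms show ?thesis
    by (cases "0 \<le> y") auto
qed

lemma abs_sin_mult_less_imp_near_grid:
  fixes m :: nat and \<delta> \<theta> :: real
  assumes "m \<ge> 1" "0 \<le> \<theta>" "\<theta> \<le> 2*pi" "\<bar>sin (real m * \<theta>)\<bar> < \<delta>"
  shows "\<exists>j\<le>2*m. \<bar>\<theta> - real j * pi / m\<bar> \<le> 3 * \<delta> / m"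
proof -
  define x where "x = real m * \<theta>"
  define j where "j = nat \<lfloor>x / pi + 1/2\<rfloor>"
  have "0 \<le> x" "x \<le> 2 * pi * m"
    using assms by (auto simp: x_def)
  then have j: "real j \<le> x / pi + 1/2" "x / pi + 1/2 < real j + 1" "x / pi \<le> 2 * m"
    by (auto simp: j_def pos_divide_le_eq mult_ac)
  define y where "y = x - real j * pi"
  have "real j * pi \<le> x + pi/2" "x < real j * pi + pi/2"
    using j by (simp_all add: field_simps)
  then have "\<bar>y\<bar> \<le> pi/2"
    unfolding y_def abs_le_iff by (intro conjI; linarith)
  moreover have "sin x = sin y * (-1) ^ j"
    by (simp add: y_def sin_diff)
  ultimately have "\<bar>y\<bar> \<le> 3 * \<delta>"
    using abs_le_three_abs_sin[of y] assms(4) by (simp add: x_def abs_mult)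
  moreover have "\<theta> - real j * pi / m = y / m"
    using assms(1) by (simp add: y_def x_def field_simps)
  moreover have "j \<le> 2 * m"
    using j by linarith
  ultimately show ?thesis
    using assms(1) by (intro exI[of _ j]) (simp add: abs_divide divide_right_mono)
qed

lemma emeasure_abs_sin_mult_less:
  fixes m :: nat and \<delta> :: real
  assumes "m \<ge> 1" "\<delta> \<ge> 0"
  shows "emeasure lborel {\<theta>\<in>{0..2*pi}. \<bar>sin (real m * \<theta>)\<bar> < \<delta>} \<le> ennreal (18 * \<delta>)"
proof -
  define I where "I j = {real j * pi / m - 3 * \<delta> / m .. real j * pi / m + 3 * \<delta> / m}" for j
  have "{\<theta>\<in>{0..2*pi}. \<bar>sin (real m * \<theta>)\<bar> < \<delta>} \<subseteq> (\<Union>j\<in>{0..2*m}. I j)"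
  proof
    fix \<theta> assume "\<theta> \<in> {\<theta>\<in>{0..2*pi}. \<bar>sin (real m * \<theta>)\<bar> < \<delta>}"
    then obtain j where "j \<le> 2*m" "\<bar>\<theta> - real j * pi / m\<bar> \<le> 3 * \<delta> / m"
      using abs_sin_mult_less_imp_near_grid[OF assms(1)] by auto
    then show "\<theta> \<in> (\<Union>j\<in>{0..2*m}. I j)"
      unfolding I_def abs_le_iff by (intro UN_I[of j]) auto
  qed
  then have "emeasure lborel {\<theta>\<in>{0..2*pi}. \<bar>sin (real m * \<theta>)\<bar> < \<delta>}
      \<le> emeasure lborel (\<Union>j\<in>{0..2*m}. I j)"
    by (intro emeasure_mono) (auto simp: I_def)
  also have "\<dots> \<le> (\<Sum>j\<in>{0..2*m}. emeasure lborel (I j))"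
    by (intro emeasure_subadditive_finite) (auto simp: I_def)
  also have "\<dots> = (\<Sum>j\<in>{0..2*m}. ennreal (6 * \<delta> / m))"
  proof (intro sum.cong refl)
    fix j
    have "3 * \<delta> / m \<ge> 0"
      using assms by simp
    then show "emeasure lborel (I j) = ennreal (6 * \<delta> / m)"
      unfolding I_def by (subst emeasure_lborel_Icc) (simp_all add: add_divide_distrib)
  qed
  also have "\<dots> = of_nat (2*m+1) * ennreal (6 * \<delta> / m)"
    by simp
  also have "\<dots> = ennreal (real (2*m+1)) * ennreal (6 * \<delta> / m)"
    by (simp only: ennreal_of_nat_eq_real_of_nat)
  also have "\<dots> = ennreal (real (2*m+1) * (6 * \<delta> / m))"
    using assms by (intro ennreal_mult[symmetric]) auto
  also have "\<dots> \<le> ennreal (18 * \<delta>)"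
  proof (rule ennreal_leI)
    have "real (2*m+1) * (6 * \<delta>) \<le> 3 * m * (6 * \<delta>)"
      using assms by (intro mult_right_mono) auto
    then show "real (2*m+1) * (6 * \<delta> / m) \<le> 18 * \<delta>"
      using assms(1) by (simp add: field_simps)
  qed
  finally show ?thesis .
qed

lemma AE_eventually_abs_sin_mult_ge:
  fixes m :: "nat \<Rightarrow> nat" and \<delta> :: "nat \<Rightarrow> real"
  assumes "\<And>k. m k \<ge> 1" "\<And>k. \<delta> k \<ge> 0" "summable \<delta>"
  shows "AE \<theta> in lborel. \<theta> \<in> {0..2*pi} \<longrightarrow> (\<forall>\<^sub>F k in sequentially. \<delta> k \<le> \<bar>sin (real (m k) * \<theta>)\<bar>)"
proof -
  define A where "A k = {\<theta>\<in>{0..2*pi}. \<bar>sin (real (m k) * \<theta>)\<bar> < \<delta> k}" for k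
  have A_sets: "A k \<in> sets lborel" for k
  proof -
    have "open {\<theta>::real. \<bar>sin (real (m k) * \<theta>)\<bar> < \<delta> k}"
      by (intro open_Collect_less continuous_intros)
    moreover have "A k = {0..2*pi} \<inter> {\<theta>. \<bar>sin (real (m k) * \<theta>)\<bar> < \<delta> k}"
      by (auto simp: A_def)
    ultimately show ?thesis
      by (simp add: sets.Int borel_open)
  qed
  have A_le: "emeasure lborel (A k) \<le> ennreal (18 * \<delta> k)" for k
    unfolding A_def by (rule emeasure_abs_sin_mult_less[OF assms(1,2)])
  have A_finite: "emeasure lborel (A k) < \<infinity>" for k
    using le_less_trans[OF A_le ennreal_less_top] by (simp add: infinity_ennreal_def)
  have "measure lborel (A k) \<le> enn2real (ennreal (18 * \<delta> k))" for k
    unfolding measure_def by (intro enn2real_mono A_le) simp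
  then have measure_A_le: "measure lborel (A k) \<le> 18 * \<delta> k" for k
    using assms(2) by simp
  have "summable (\<lambda>k. measure lborel (A k))"
    by (rule summable_comparison_test[OF _ summable_mult[OF assms(3)]]) (use measure_A_le in auto)
  from borel_cantelli_AE1[OF A_sets A_finite this] show ?thesis
  proof (rule eventually_mono)
    fix \<theta> assume "\<forall>\<^sub>F k in sequentially. \<theta> \<in> space lborel - A k"
    then show "\<theta> \<in> {0..2*pi} \<longrightarrow> (\<forall>\<^sub>F k in sequentially. \<delta> k \<le> \<bar>sin (real (m k) * \<theta>)\<bar>)"
      by (intro impI, elim eventually_mono) (simp add: A_def not_less)
  qed
qed

section \<open>Moduli of the factors\<close>

lemma abs_sin_le_norm_one_plus_cis:
  fixes \<rho> t :: real
  shows "\<bar>sin t\<bar> \<le> cmod (1 + of_real \<rho> * cis t)"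
proof -
  have "(1 + \<rho> * cos t)^2 + (\<rho> * sin t)^2 = (\<rho> + cos t)^2 + (sin t)^2"
    using sin_cos_squared_add[of t] by algebra
  then have "sqrt ((sin t)^2) \<le> sqrt ((1 + \<rho> * cos t)^2 + (\<rho> * sin t)^2)"
    by (intro real_sqrt_le_mono) simp
  then show ?thesis
    by (simp add: cmod_def cis.code)
qed

lemma abs_diff_one_le_norm_one_plus_cis:
  fixes \<rho> t :: real
  assumes "0 \<le> \<rho>"
  shows "\<bar>\<rho> - 1\<bar> \<le> cmod (1 + of_real \<rho> * cis t)"
  using norm_triangle_ineq3[of "of_real \<rho> * cis t" "-1"] assms by (simp add: norm_mult add.commute)

lemma exp_neg_two_mult_le_norm_one_plus_cis:
  fixes \<rho> t :: real
  assumes "0 \<le> \<rho>" "\<rho> \<le> 1/2"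
  shows "exp (- 2 * \<rho>) \<le> cmod (1 + of_real \<rho> * cis t)"
proof -
  have "\<rho>^2 \<le> \<rho> / 2"
    using mult_left_mono[OF assms(2,1)] by (simp add: power2_eq_square)
  then have "- 2 * \<rho> \<le> ln (1 - \<rho>)"
    using ln_one_minus_pos_lower_bound[OF assms] by linarith
  then have "exp (- 2 * \<rho>) \<le> 1 - \<rho>"
    using assms by (simp add: ln_ge_iff)
  also have "\<dots> \<le> cmod (1 + of_real \<rho> * cis t)"
    using abs_diff_one_le_norm_one_plus_cis[OF assms(1), of t] by linarith
  finally show ?thesis .
qed

lemma exp_le_norm_prodinf:
  fixes F :: "nat \<Rightarrow> 'a :: {real_normed_field, banach}"
  assumes "summable (\<lambda>k. norm (F k - 1))"
    and "\<And>k. exp (b k) \<le> norm (F k)"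
    and "\<And>n. n \<ge> N \<Longrightarrow> B \<le> (\<Sum>k<n. b k)"
  shows "exp B \<le> norm (prodinf F)"
proof -
  have "convergent_prod F"
    by (intro abs_convergent_prod_imp_convergent_prod summable_imp_abs_convergent_prod assms(1))
  then have "(\<lambda>n. norm (\<Prod>k\<le>n. F k)) \<longlonglongrightarrow> norm (prodinf F)"
    by (intro tendsto_norm convergent_prod_LIMSEQ)
  moreover have "exp B \<le> norm (\<Prod>k\<le>n. F k)" if "n \<ge> N" for n
  proof -
    have "exp B \<le> exp (\<Sum>k<Suc n. b k)"
      using assms(3)[of "Suc n"] that by simp
    also have "\<dots> = (\<Prod>k\<le>n. exp (b k))"
      by (simp add: exp_sum lessThan_Suc_atMost)
    also have "\<dots> \<le> (\<Prod>k\<le>n. norm (F k))"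
      by (intro prod_mono) (simp add: assms(2) less_imp_le)
    finally show ?thesis
      by (simp add: prod_norm)
  qed
  ultimately show ?thesis
    by (intro LIMSEQ_le_const) auto
qed

section \<open>Lower bound for \<open>|f\<^sub>\<mu>\<^sub>,\<^sub>\<beta>|\<close> along a ray\<close>

lemma f_mu_beta_of_real_mult_cis:
  "f_mu_beta \<mu> \<beta> (of_real r * cis \<theta>)
    = (\<Prod>k. 1 + of_real (\<mu> * r ^ \<beta> ^ Suc k) * cis (real (\<beta> ^ Suc k) * \<theta>))"
  unfolding f_mu_beta_def power_mult_distrib Complex.DeMoivre by (simp add: mult.assoc)

lemma power_power_Suc_le:
  fixes r :: real and \<beta> g k :: nat
  assumes "0 \<le> r" "r \<le> 1" "\<beta> \<ge> 2" "g \<le> k"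
  shows "r ^ \<beta> ^ Suc k \<le> (r ^ \<beta> ^ Suc g) ^ (k - g)"
proof -
  have "k - g < 2 ^ (k - g)"
    by simp
  also have "(2::nat) ^ (k - g) \<le> \<beta> ^ (k - g)"
    using assms(3) by (intro power_mono) auto
  finally have "k - g \<le> \<beta> ^ (k - g)"
    by simp
  have "Suc k = Suc g + (k - g)"
    using assms(4) by simp
  then have "r ^ \<beta> ^ Suc k = (r ^ \<beta> ^ Suc g) ^ \<beta> ^ (k - g)"
    by (simp only: power_add power_mult)
  also have "\<dots> \<le> (r ^ \<beta> ^ Suc g) ^ (k - g)"
    using \<open>k - g \<le> \<beta> ^ (k - g)\<close> assms(1,2) by (intro power_decreasing) (auto intro: power_le_one)
  finally show ?thesis .
qed

lemma sum_three_phases_ge: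
  fixes \<gamma> l \<mu> c :: real and g C n :: nat
  assumes "0 \<le> c" "c < 1" "0 \<le> \<mu>" "g + C \<le> n"
  shows "\<gamma> * g - C * l - 2 * \<mu> / (1 - c)
    \<le> (\<Sum>k<n. if k < g then \<gamma> else if k < g + C then - l else - 2 * \<mu> * c ^ (k - g))"
proof -
  define b where "b k = (if k < g then \<gamma> else if k < g + C then - l else - 2 * \<mu> * c ^ (k - g))" for k
  have "(\<Sum>k\<in>{g+C..<n}. c ^ (k - g)) \<le> (\<Sum>k\<in>{g..<n}. c ^ (k - g))"
    using assms(1) by (intro sum_mono2) auto
  also have "\<dots> = (\<Sum>i<n - g. c ^ i)"
    using sum.shift_bounds_nat_ivl[of "\<lambda>k. c ^ (k - g)" 0 g "n - g"] assms(4)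
    by (simp add: lessThan_atLeast0)
  also have "\<dots> = (1 - c ^ (n - g)) / (1 - c)"
    using assms(2) by (simp add: sum_gp_strict)
  also have "\<dots> \<le> 1 / (1 - c)"
    using assms(1,2) by (intro divide_right_mono) auto
  finally have "2 * \<mu> * (\<Sum>k\<in>{g+C..<n}. c ^ (k - g)) \<le> 2 * \<mu> * (1 / (1 - c))"
    using assms(3) by (intro mult_left_mono) auto
  moreover have "(\<Sum>k<n. b k) = (\<Sum>k\<in>{0..<g}. b k) + (\<Sum>k\<in>{g..<g+C}. b k) + (\<Sum>k\<in>{g+C..<n}. b k)"
    using assms(4) by (simp add: lessThan_atLeast0 sum.atLeastLessThan_concat)
  moreover have "(\<Sum>k\<in>{0..<g}. b k) = \<gamma> * g" "(\<Sum>k\<in>{g..<g+C}. b k) = - (C * l)"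
    by (simp_all add: b_def)
  moreover have "(\<Sum>k\<in>{g+C..<n}. b k) = - (2 * \<mu> * (\<Sum>k\<in>{g+C..<n}. c ^ (k - g)))"
    by (simp add: b_def sum_distrib_left sum_negf)
  ultimately have "\<gamma> * g - C * l - 2 * \<mu> / (1 - c) \<le> (\<Sum>k<n. b k)"
    by simp
  then show ?thesis
    by (simp add: b_def)
qed

lemma exp_le_norm_f_mu_beta:
  fixes \<mu> r \<theta> c0 :: real and \<beta> g C :: nat
  assumes "\<beta> \<ge> 2" "0 < \<mu>" "0 < c0" "c0 < 1" "1 < \<mu> * c0" "\<mu> * c0 ^ C \<le> 1/2"
    and "0 \<le> r" "r < 1"
    and before: "\<And>k. k < g \<Longrightarrow> c0 \<le> r ^ \<beta> ^ Suc k" and at: "r ^ \<beta> ^ Suc g < c0"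
    and sine: "\<And>k. k \<ge> g \<Longrightarrow> 1 / (real k + 2)^2 \<le> \<bar>sin (real (\<beta> ^ Suc k) * \<theta>)\<bar>"
  shows "exp (ln (\<mu> * c0 - 1) * g - C * (2 * ln (real g + C + 2)) - 2 * \<mu> / (1 - c0))
    \<le> cmod (f_mu_beta \<mu> \<beta> (of_real r * cis \<theta>))"
proof -
  define \<rho> where "\<rho> k = \<mu> * r ^ \<beta> ^ Suc k" for k
  define F where "F k = 1 + of_real (\<rho> k) * cis (real (\<beta> ^ Suc k) * \<theta>)" for k
  define b where "b k = (if k < g then ln (\<mu> * c0 - 1) else if k < g + C
      then - (2 * ln (real g + C + 2)) else - 2 * \<mu> * c0 ^ (k - g))" for k
  have \<rho>_nonneg: "0 \<le> \<rho> k" for k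
    using assms by (simp add: \<rho>_def)
  have tail: "\<rho> k \<le> \<mu> * c0 ^ (k - g)" if "g \<le> k" for k
  proof -
    have "r ^ \<beta> ^ Suc k \<le> (r ^ \<beta> ^ Suc g) ^ (k - g)"
      using power_power_Suc_le assms that by simp
    also have "\<dots> \<le> c0 ^ (k - g)"
      by (rule power_mono) (use at assms(7) in auto)
    finally show ?thesis
      using assms(2) by (simp add: \<rho>_def)
  qed
  have "summable (\<lambda>k. norm (F k - 1))"
  proof (rule summable_comparison_test[OF _ summable_mult[OF summable_geometric]])
    show "norm (r ^ \<beta>) < 1"
      using assms(1,7,8) by (simp add: power_less_one_iff abs_of_nonneg)
    have "norm (norm (F k - 1)) \<le> \<mu> * (r ^ \<beta>) ^ k" for k
    proof -
      have "norm (norm (F k - 1)) = \<mu> * r ^ \<beta> ^ Suc k"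
        using \<rho>_nonneg[of k] by (simp add: F_def norm_mult) (simp add: \<rho>_def)
      also have "\<dots> \<le> \<mu> * (r ^ \<beta>) ^ k"
        using power_power_Suc_le[of r \<beta> 0 k] assms(1,2,7,8) by (intro mult_left_mono) auto
      finally show ?thesis .
    qed
    then show "\<exists>N. \<forall>n\<ge>N. norm (norm (F n - 1)) \<le> \<mu> * (r ^ \<beta>) ^ n"
      by blast
  qed
  moreover have "exp (b k) \<le> cmod (F k)" for k
  proof -
    consider "k < g" | "g \<le> k" "k < g + C" | "g + C \<le> k"
      by linarith
    then show ?thesis
    proof cases
      case 1
      then have "\<mu> * c0 - 1 \<le> \<rho> k - 1"
        using before assms(2) by (simp add: \<rho>_def)
      then have "\<mu> * c0 - 1 \<le> cmod (F k)"
        using abs_diff_one_le_norm_one_plus_cis[OF \<rho>_nonneg, of k "real (\<beta> ^ Suc k) * \<theta>"]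
          abs_ge_self[of "\<rho> k - 1"]
        unfolding F_def by linarith
      then show ?thesis
        using 1 assms(5) by (simp add: b_def)
    next
      case 2
      have "exp (b k) = 1 / (real g + C + 2)^2"
        using 2 by (simp add: b_def exp_minus exp_double divide_inverse)
      also have "\<dots> \<le> 1 / (real k + 2)^2"
        using 2 by (intro divide_left_mono power_mono) auto
      finally show ?thesis
        using sine[OF 2(1)] abs_sin_le_norm_one_plus_cis[of "real (\<beta> ^ Suc k) * \<theta>" "\<rho> k"]
        unfolding F_def by linarith
    next
      case 3
      have "c0 ^ (k - g) \<le> c0 ^ C"
        using 3 assms(3,4) by (intro power_decreasing) auto
      then have "\<rho> k \<le> 1/2"
        using tail[of k] mult_left_mono[of "c0 ^ (k - g)" "c0 ^ C" \<mu>] 3 assms(2,6) by linarith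
      then have "exp (- 2 * \<rho> k) \<le> cmod (F k)"
        unfolding F_def by (intro exp_neg_two_mult_le_norm_one_plus_cis \<rho>_nonneg)
      moreover have "b k \<le> - 2 * \<rho> k"
        using 3 tail[of k] by (simp add: b_def)
      ultimately show ?thesis
        by (meson exp_le_cancel_iff order.trans)
    qed
  qed
  moreover have "ln (\<mu> * c0 - 1) * g - C * (2 * ln (real g + C + 2)) - 2 * \<mu> / (1 - c0)
      \<le> (\<Sum>k<n. b k)" if "n \<ge> g + C" for n
    unfolding b_def by (rule sum_three_phases_ge) (use assms that in auto)
  ultimately have "exp (ln (\<mu> * c0 - 1) * g - C * (2 * ln (real g + C + 2)) - 2 * \<mu> / (1 - c0))
      \<le> norm (prodinf F)"
    by (rule exp_le_norm_prodinf)
  then show ?thesis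
    unfolding f_mu_beta_of_real_mult_cis F_def[abs_def] \<rho>_def .
qed

section \<open>Growth along a ray\<close>

lemma ln_div_one_minus_less_ln:
  fixes r c :: real and m :: nat
  assumes "1/2 < r" "r < 1" "0 < c" "c < 1" "r ^ m < c"
  shows "ln (- ln c / 2) - ln (1 - r) < ln m"
proof -
  have "ln (r ^ m) < ln c"
    using assms by simp
  then have "- ln c < m * (- ln r)"
    using assms by (simp add: ln_realpow)
  moreover have "- ln r \<le> 2 * (1 - r)"
  proof -
    have "- ln r = ln (1 / r)"
      using assms by (simp add: ln_div)
    also have "\<dots> \<le> 1 / r - 1"
      using assms by (intro ln_le_minus_one) auto
    also have "\<dots> = (1 - r) / r"
      using assms by (simp add: field_simps)
    also have "\<dots> \<le> 2 * (1 - r)"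
    proof -
      have "0 \<le> (1 - r) * (2 * r - 1)"
        using assms by (intro mult_nonneg_nonneg) auto
      then have "1 - r \<le> 2 * (1 - r) * r"
        by (simp add: algebra_simps)
      then show ?thesis
        using assms by (simp add: pos_divide_le_eq)
    qed
    finally show ?thesis .
  qed
  then have "m * (- ln r) \<le> m * (2 * (1 - r))"
    by (intro mult_left_mono) auto
  ultimately have less: "- ln c / 2 / (1 - r) < m"
    using assms by (simp add: field_simps)
  have pos: "0 < - ln c / 2 / (1 - r)"
    using assms by (intro divide_pos_pos) auto
  have "ln (- ln c / 2 / (1 - r)) < ln m"
    by (subst ln_less_cancel_iff) (use pos less in auto)
  moreover have "ln (- ln c / 2 / (1 - r)) = ln (- ln c / 2) - ln (1 - r)"
    using assms by (subst ln_divide_pos) auto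
  ultimately show ?thesis
    by simp
qed

lemma eventually_half_linear_le_linear_minus_ln:
  fixes \<gamma> a b d :: real
  assumes "0 < \<gamma>"
  shows "\<forall>\<^sub>F n in sequentially. \<gamma> / 2 * n \<le> \<gamma> * n - a * ln (real n + b) - d"
proof -
  have "(\<lambda>n::nat. (a * ln (real n + b) + d) / n) \<longlonglongrightarrow> 0"
    by real_asymp
  from order_tendstoD(2)[OF this, of "\<gamma> / 2"] assms
  have "\<forall>\<^sub>F n in sequentially. (a * ln (real n + b) + d) / n < \<gamma> / 2"
    by simp
  then have "\<forall>\<^sub>F n in sequentially. (a * ln (real n + b) + d) / n < \<gamma> / 2 \<and> n \<ge> 1"
    using eventually_ge_at_top by (rule eventually_conj)
  moreover have "\<gamma> / 2 * n \<le> \<gamma> * n - a * ln (real n + b) - d"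
    if "(a * ln (real n + b) + d) / n < \<gamma> / 2" "n \<ge> 1" for n :: nat
    using that by (simp add: pos_divide_less_eq algebra_simps)
  ultimately show ?thesis
    by (auto elim: eventually_mono)
qed

lemma obtain_first_power_power_Suc_less:
  fixes r c :: real and \<beta> :: nat
  assumes "1 < \<beta>" "0 \<le> r" "r < 1" "0 < c"
  obtains g where "r ^ \<beta> ^ Suc g < c" "\<And>k. k < g \<Longrightarrow> c \<le> r ^ \<beta> ^ Suc k"
proof -
  obtain n where "(r ^ \<beta>) ^ n < c"
    using real_arch_pow_inv[of c "r ^ \<beta>"] assms by (auto simp: power_less_one_iff)
  then have "\<exists>n. r ^ \<beta> ^ Suc n < c"
    using power_power_Suc_le[of r \<beta> 0 n] assms by (intro exI[of _ n]) auto
  from LeastI_ex[OF this] not_less_Least[of _ "\<lambda>n. r ^ \<beta> ^ Suc n < c"] show ?thesis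
    by (intro that[of "LEAST n. r ^ \<beta> ^ Suc n < c"]) force+
qed

lemma eventually_ln_norm_f_mu_beta_ge:
  fixes \<mu> \<theta> :: real and \<beta> K :: nat
  assumes "1 < \<beta>" "2 < \<mu>"
    and sine: "\<And>k. k \<ge> K \<Longrightarrow> 1 / (real k + 2)^2 \<le> \<bar>sin (real (\<beta> ^ Suc k) * \<theta>)\<bar>"
  obtains c :: real where "0 < c" and "\<forall>\<^sub>F r in at_left 1. f_mu_beta \<mu> \<beta> (of_real r * cis \<theta>) \<noteq> 0
    \<and> c * - ln (1 - r) \<le> ln (cmod (f_mu_beta \<mu> \<beta> (of_real r * cis \<theta>)))"
proof -
  define c0 where "c0 = 1/2 + 1/\<mu>"
  have c0: "0 < c0" "c0 < 1" "\<mu> * c0 - 1 = \<mu> / 2"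
    using assms(2) by (auto simp: c0_def field_simps)
  obtain C where "c0 ^ C < 1 / (2 * \<mu>)"
    using real_arch_pow_inv[of "1 / (2 * \<mu>)" c0] assms(2) c0 by auto
  then have C: "\<mu> * c0 ^ C \<le> 1/2"
    using assms(2) by (simp add: field_simps)
  define \<gamma> where "\<gamma> = ln (\<mu> / 2)"
  define l\<beta> where "l\<beta> = ln (real \<beta>)"
  define e where "e = ln (- ln c0 / 2)"
  have "0 < \<gamma>" "0 < l\<beta>"
    using assms by (auto simp: \<gamma>_def l\<beta>_def)
  obtain G where G: "\<And>n. n \<ge> G \<Longrightarrow>
      \<gamma> / 2 * n \<le> \<gamma> * n - 2 * C * ln (real n + C + 2) - 2 * \<mu> / (1 - c0)"
    using eventually_half_linear_le_linear_minus_ln[OF \<open>0 < \<gamma>\<close>, of "2 * C" "real C + 2" "2 * \<mu> / (1 - c0)"]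
    unfolding eventually_sequentially add.assoc by blast
  define T where "T = max (real (max K G + 1) * l\<beta> - e) (2 * (l\<beta> - e))"
  have "filterlim (\<lambda>r::real. - ln (1 - r)) at_top (at_left 1)"
    by real_asymp
  then have "\<forall>\<^sub>F r in at_left 1. 1/2 < r \<and> r < 1 \<and> T \<le> - ln (1 - r)"
    using eventually_at_left_real[of "1/2" 1] by (auto simp: filterlim_at_top elim: eventually_elim2)
  then have "\<forall>\<^sub>F r in at_left 1. f_mu_beta \<mu> \<beta> (of_real r * cis \<theta>) \<noteq> 0
    \<and> \<gamma> / (4 * l\<beta>) * - ln (1 - r) \<le> ln (cmod (f_mu_beta \<mu> \<beta> (of_real r * cis \<theta>)))"
  proof eventually_elim
    case (elim r)
    define L where "L = - ln (1 - r)"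
    obtain g where at: "r ^ \<beta> ^ Suc g < c0" and before: "\<And>k. k < g \<Longrightarrow> c0 \<le> r ^ \<beta> ^ Suc k"
      using obtain_first_power_power_Suc_less[OF assms(1) _ _ c0(1), of r] elim by auto
    have "e + L < ln (real (\<beta> ^ Suc g))"
      using ln_div_one_minus_less_ln[OF _ _ c0(1,2) at] elim by (simp add: e_def L_def)
    then have g: "e + L < (real g + 1) * l\<beta>"
      using assms(1) by (simp add: l\<beta>_def ln_realpow add.commute del: power_Suc)
    moreover have "real (max K G + 1) * l\<beta> - e \<le> L" "2 * (l\<beta> - e) \<le> L"
      using elim by (simp_all add: T_def L_def)
    ultimately have "real (max K G + 1) * l\<beta> < (real g + 1) * l\<beta>"
      by linarith
    then have "K \<le> g" "G \<le> g"
      using \<open>0 < l\<beta>\<close> by (simp_all add: mult_less_cancel_right)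
    let ?f = "f_mu_beta \<mu> \<beta> (of_real r * cis \<theta>)"
    let ?E = "\<gamma> * g - C * (2 * ln (real g + C + 2)) - 2 * \<mu> / (1 - c0)"
    have "exp (ln (\<mu> * c0 - 1) * g - C * (2 * ln (real g + C + 2)) - 2 * \<mu> / (1 - c0)) \<le> cmod ?f"
      by (rule exp_le_norm_f_mu_beta[OF _ _ c0(1,2) _ C _ _ before at])
        (use assms elim c0(3) sine \<open>K \<le> g\<close> in auto)
    then have "exp ?E \<le> cmod ?f"
      by (simp add: \<gamma>_def c0(3))
    moreover have "0 < cmod ?f"
      using \<open>exp ?E \<le> cmod ?f\<close> exp_gt_zero less_le_trans by blast
    ultimately have "?E \<le> ln (cmod ?f)"
      by (simp add: ln_ge_iff)
    moreover have "\<gamma> / 2 * g \<le> ?E"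
      using G[OF \<open>G \<le> g\<close>] by (simp add: mult_ac)
    moreover have "L / (2 * l\<beta>) \<le> real g"
      using g \<open>2 * (l\<beta> - e) \<le> L\<close> \<open>0 < l\<beta>\<close> by (simp add: field_simps)
    then have "\<gamma> / 2 * (L / (2 * l\<beta>)) \<le> \<gamma> / 2 * g"
      using \<open>0 < \<gamma>\<close> by (intro mult_left_mono) auto
    ultimately show ?case
      using \<open>0 < cmod ?f\<close> by (simp add: L_def mult_ac)
  qed
  moreover have "0 < \<gamma> / (4 * l\<beta>)"
    using \<open>0 < \<gamma>\<close> \<open>0 < l\<beta>\<close> by simp
  ultimately show ?thesis
    using that by blast
qed

lemma Liminf_log_abs_div_pos:
  fixes h :: "real \<Rightarrow> complex" and c :: real
  assumes "0 < c" and "\<forall>\<^sub>F r in at_left 1. h r \<noteq> 0 \<and> c * - ln (1 - r) \<le> ln (cmod (h r))"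
  shows "0 < Liminf (at_left 1) (\<lambda>r. log_abs (h r) / ereal \<bar>ln (1 - r)\<bar>)"
proof -
  have "\<forall>\<^sub>F r in at_left 1. ereal c \<le> log_abs (h r) / ereal \<bar>ln (1 - r)\<bar>"
    using assms(2) eventually_at_left_real[OF zero_less_one]
  proof eventually_elim
    case (elim r)
    define L where "L = - ln (1 - r)"
    have "0 < L" "\<bar>ln (1 - r)\<bar> = L"
      using elim by (auto simp: L_def)
    moreover have "c * L \<le> ln (cmod (h r))"
      using elim by (simp add: L_def)
    ultimately show ?case
      using elim by (simp add: log_abs_def pos_le_divide_eq)
  qed
  then have "ereal c \<le> Liminf (at_left 1) (\<lambda>r. log_abs (h r) / ereal \<bar>ln (1 - r)\<bar>)"
    by (rule Liminf_bounded)
  moreover have "0 < ereal c"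
    using assms(1) by simp
  ultimately show ?thesis
    by order
qed

theorem proposition3:
  fixes \<mu> :: real and \<beta> :: nat
  assumes "\<mu> > 1" and "\<beta> > 1"
    and "1 - \<mu> powr (-(1 - 1 / sqrt (real \<beta>))) \<ge> 1 / exp 1"
    and "\<mu> > exp 1"
  shows "{0..<2*pi} - D_plus (f_mu_beta \<mu> \<beta>) \<in> null_sets lebesgue"
proof -
  have "\<mu> > 2"
    using assms(4) exp_ge_add_one_self[of 1] by linarith
  have "summable (\<lambda>k. 1 / (real k + 2)^2)"
    using inverse_power_summable[of 2, where 'a=real] summable_iff_shift[of "\<lambda>n. inverse (real n ^ 2)" 2]
    by (simp add: divide_inverse add.commute)
  then have "AE \<theta> in lborel. \<theta> \<in> {0..2*pi} \<longrightarrow>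
      (\<forall>\<^sub>F k in sequentially. 1 / (real k + 2)^2 \<le> \<bar>sin (real (\<beta> ^ Suc k) * \<theta>)\<bar>)"
    using assms(2) by (intro AE_eventually_abs_sin_mult_ge) auto
  then have "AE \<theta> in lebesgue. \<theta> \<in> {0..<2*pi} \<longrightarrow> \<theta> \<in> D_plus (f_mu_beta \<mu> \<beta>)"
  proof (rule AE_completion[THEN eventually_mono], intro impI)
    fix \<theta> assume "\<theta> \<in> {0..2*pi} \<longrightarrow>
        (\<forall>\<^sub>F k in sequentially. 1 / (real k + 2)^2 \<le> \<bar>sin (real (\<beta> ^ Suc k) * \<theta>)\<bar>)"
      and \<theta>: "\<theta> \<in> {0..<2*pi}"
    then obtain K where "\<And>k. k \<ge> K \<Longrightarrow> 1 / (real k + 2)^2 \<le> \<bar>sin (real (\<beta> ^ Suc k) * \<theta>)\<bar>"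
      by (auto simp: eventually_sequentially)
    then obtain c where "0 < c" and "\<forall>\<^sub>F r in at_left 1. f_mu_beta \<mu> \<beta> (of_real r * cis \<theta>) \<noteq> 0
        \<and> c * - ln (1 - r) \<le> ln (cmod (f_mu_beta \<mu> \<beta> (of_real r * cis \<theta>)))"
      by (rule eventually_ln_norm_f_mu_beta_ge[OF assms(2) \<open>\<mu> > 2\<close>])
    from Liminf_log_abs_div_pos[OF this] \<theta> show "\<theta> \<in> D_plus (f_mu_beta \<mu> \<beta>)"
      by (simp add: D_plus_def)
  qed
  then show ?thesis
    by (simp add: completion.AE_iff_null_sets set_diff_eq)
qed

end
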